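(* Let $H$ be a complex Hilbert space, $\varphi,\psi:[0,1]\to\mathbb{R}$ continuous, $A\in\mathbb{B}(H)$ and $t\in[0,1]$. Then $$\omega_t^2(\varphi,\psi;A)\le|\varphi(t)|^2\omega^2(A)+|\varphi(t)\psi(t)|\,\omega(A^2)+\frac{|\varphi(t)|+|\psi(t)|}{2}\,|\psi(t)|\,\|A^*A+AA^*\|.$$
   Context: $S_1(H)$ is the unit sphere of $H$, $\omega(T)=\sup_{x\in S_1(H)}|\langle Tx,x\rangle|$, and $\omega_t(\varphi,\psi;A)=\sup_{x\in S_1(H)}|\langle(\varphi(t)A+\psi(t)A^* )x,x\rangle|$. *)

theory Defs
  imports "HOL-Analysis.Analysis"
begin

class cvec = real_vector +
  fixes scaleC :: "complex \<Rightarrow> 'a \<Rightarrow> 'a" (infixr "*\<^sub>C" 75)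
  assumes scaleC_add_right: "a *\<^sub>C (x + y) = a *\<^sub>C x + a *\<^sub>C y"
    and scaleC_add_left: "(a + b) *\<^sub>C x = a *\<^sub>C x + b *\<^sub>C x"
    and scaleC_scaleC: "a *\<^sub>C (b *\<^sub>C x) = (a * b) *\<^sub>C x"
    and scaleC_one: "1 *\<^sub>C x = x"
    and scaleR_scaleC: "scaleR r x = complex_of_real r *\<^sub>C x"

text \<open>Complex inner product spaces (inner product linear in the first argument),
  whose norm is the one induced by the inner product.  A complex Hilbert space is
  such a space that is additionally complete (class complete_space).\<close>
class cinner_space = cvec + real_normed_vector +
  fixes cinner :: "'a \<Rightarrow> 'a \<Rightarrow> complex"
  assumes cinner_conj: "cinner x y = cnj (cinner y x)"
    and cinner_add_left: "cinner (x + y) z = cinner x z + cinner y z"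
    and cinner_scaleC_left: "cinner (a *\<^sub>C x) y = a * cinner x y"
    and cinner_nonneg: "0 \<le> Re (cinner x x)"
    and cinner_eq_zero: "cinner x x = 0 \<longleftrightarrow> x = 0"
    and norm_cinner: "norm x = sqrt (Re (cinner x x))"

definition clinear_op :: "('a::cvec \<Rightarrow> 'a) \<Rightarrow> bool" where
  "clinear_op T \<longleftrightarrow> (\<forall>x y. T (x + y) = T x + T y) \<and> (\<forall>c x. T (c *\<^sub>C x) = c *\<^sub>C T x)"

definition bounded_op :: "('a::cinner_space \<Rightarrow> 'a) \<Rightarrow> bool" where
  "bounded_op T \<longleftrightarrow> clinear_op T \<and> (\<exists>K. \<forall>x. norm (T x) \<le> K * norm x)"

definition is_adjoint :: "('a::cinner_space \<Rightarrow> 'a) \<Rightarrow> ('a \<Rightarrow> 'a) \<Rightarrow> bool" where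
  "is_adjoint A B \<longleftrightarrow> (\<forall>x y. cinner (A x) y = cinner x (B y))"

definition unit_sphere :: "'a::cinner_space set" where
  "unit_sphere = {x. norm x = 1}"

definition num_radius :: "('a::cinner_space \<Rightarrow> 'a) \<Rightarrow> real" where
  "num_radius T = (SUP x\<in>unit_sphere. cmod (cinner (T x) x))"

definition op_norm :: "('a::cinner_space \<Rightarrow> 'a) \<Rightarrow> real" where
  "op_norm T = (SUP x\<in>unit_sphere. norm (T x))"

definition omega_t :: "(real \<Rightarrow> real) \<Rightarrow> (real \<Rightarrow> real) \<Rightarrow> ('a::cinner_space \<Rightarrow> 'a) \<Rightarrow> ('a \<Rightarrow> 'a) \<Rightarrow> real \<Rightarrow> real" where
  "omega_t \<phi> \<psi> A Astar t =
     (SUP x\<in>unit_sphere. cmod (cinner (complex_of_real (\<phi> t) *\<^sub>C A x + complex_of_real (\<psi> t) *\<^sub>C Astar x) x))"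

end

theory Submission
  imports Defs
begin

text \<open>Fix a unit vector \<open>x\<close>, write \<open>A\<^sup>*\<close> for the adjoint and \<open>z = \<langle>Ax, x\<rangle>\<close>.  Then
  \<open>\<langle>(aA + bA\<^sup>*)x, x\<rangle> = az + b z\<^sup>*\<close>, whose squared modulus is
  \<open>(a + b)\<^sup>2 (Re z)\<^sup>2 + (a - b)\<^sup>2 (Im z)\<^sup>2 = a\<^sup>2 \<bar>z\<bar>\<^sup>2 + b\<^sup>2 \<bar>z\<bar>\<^sup>2 + 2ab ((Re z)\<^sup>2 - (Im z)\<^sup>2)\<close>.
  Cauchy-Schwarz applied to \<open>(A \<plusminus> A\<^sup>*)x\<close> gives \<open>4 (Re z)\<^sup>2 \<le> N + 2R\<close> and
  \<open>4 (Im z)\<^sup>2 \<le> N - 2R\<close>, where \<open>N = \<parallel>Ax\<parallel>\<^sup>2 + \<parallel>A\<^sup>*x\<parallel>\<^sup>2 = \<langle>(A\<^sup>*A + AA\<^sup>*)x, x\<rangle> \<le> \<parallel>A\<^sup>*A + AA\<^sup>*\<parallel>\<close>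
  and \<open>R = Re \<langle>A\<^sup>2x, x\<rangle>\<close>, so \<open>\<bar>R\<bar> \<le> \<omega>(A\<^sup>2)\<close>.  These bound the last two terms;
  taking suprema over the unit sphere finishes the proof.\<close>

lemma cinner_add_right: "cinner x (y + z) = cinner x y + cinner (x::'a::cinner_space) z"
  by (metis cinner_conj cinner_add_left complex_cnj_add)

lemma cinner_scaleC_right: "cinner (x::'a::cinner_space) (a *\<^sub>C y) = cnj a * cinner x y"
  by (metis cinner_conj cinner_scaleC_left complex_cnj_mult complex_cnj_cnj)

lemma scaleC_minus_one: "(-1) *\<^sub>C x = - (x::'a::cvec)"
  by (metis scaleR_scaleC scaleR_minus1_left of_real_1 of_real_minus)

lemma cinner_minus_left: "cinner (- x) y = - cinner (x::'a::cinner_space) y"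
  by (metis scaleC_minus_one cinner_scaleC_left mult_minus1)

lemma cinner_minus_right: "cinner x (- y) = - cinner (x::'a::cinner_space) y"
  by (metis cinner_conj cinner_minus_left complex_cnj_minus)

lemma cinner_diff_left: "cinner (x - y) z = cinner x z - cinner (y::'a::cinner_space) z"
  by (metis diff_conv_add_uminus cinner_add_left cinner_minus_left)

lemma cinner_diff_right: "cinner x (y - z) = cinner x y - cinner (x::'a::cinner_space) z"
  by (metis diff_conv_add_uminus cinner_add_right cinner_minus_right)

lemma cinner_zero_right: "cinner (x::'a::cinner_space) 0 = 0"
  using cinner_diff_right[of x 0 0] by simp

lemma cinner_self: "cinner (x::'a::cinner_space) x = complex_of_real ((norm x)\<^sup>2)"
proof (rule complex_eqI)
  show "Re (cinner x x) = Re (complex_of_real ((norm x)\<^sup>2))"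
    using norm_cinner[of x] cinner_nonneg[of x] by simp
  show "Im (cinner x x) = Im (complex_of_real ((norm x)\<^sup>2))"
    using arg_cong[OF cinner_conj[of x x], of Im] by simp
qed

lemma power2_norm_add_cinner:
  "(norm (x + y))\<^sup>2 = (norm x)\<^sup>2 + (norm y)\<^sup>2 + 2 * Re (cinner x (y::'a::cinner_space))"
proof -
  have "complex_of_real ((norm (x + y))\<^sup>2) = cinner (x + y) (x + y)"
    by (rule cinner_self[symmetric])
  also have "\<dots> = cinner x x + cinner y y + (cinner x y + cnj (cinner x y))"
    by (simp add: cinner_add_left cinner_add_right cinner_conj[of y x])
  also have "\<dots> = complex_of_real ((norm x)\<^sup>2 + (norm y)\<^sup>2 + 2 * Re (cinner x y))"
    by (simp add: cinner_self complex_add_cnj)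
  finally show ?thesis
    by (simp only: of_real_eq_iff)
qed

lemma power2_norm_diff_cinner:
  "(norm (x - y))\<^sup>2 = (norm x)\<^sup>2 + (norm y)\<^sup>2 - 2 * Re (cinner x (y::'a::cinner_space))"
proof -
  have "complex_of_real ((norm (x - y))\<^sup>2) = cinner (x - y) (x - y)"
    by (rule cinner_self[symmetric])
  also have "\<dots> = cinner x x + cinner y y - (cinner x y + cnj (cinner x y))"
    by (simp add: cinner_diff_left cinner_diff_right cinner_conj[of y x])
  also have "\<dots> = complex_of_real ((norm x)\<^sup>2 + (norm y)\<^sup>2 - 2 * Re (cinner x y))"
    by (simp add: cinner_self complex_add_cnj)
  finally show ?thesis
    by (simp only: of_real_eq_iff)
qed

lemma Cauchy_Schwarz_cinner: "cmod (cinner x y) \<le> norm x * norm (y::'a::cinner_space)"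
proof (cases "y = 0")
  case True
  then show ?thesis by (simp add: cinner_zero_right)
next
  case False
  define p where "p = cinner x y"
  define n where "n = (norm y)\<^sup>2"
  have n: "n > 0"
    using False by (simp add: n_def)
  \<comment> \<open>\<open>x + d y\<close> is the component of \<open>x\<close> orthogonal to \<open>y\<close>\<close>
  define d where "d = - p / complex_of_real n"
  have "cinner (x + d *\<^sub>C y) (x + d *\<^sub>C y)
      = complex_of_real ((norm x)\<^sup>2) - p * cnj p / complex_of_real n"
    using n
    by (simp only: cinner_add_left cinner_add_right cinner_scaleC_left cinner_scaleC_right)
      (simp add: cinner_self[of x] cinner_self[of y, folded n_def] cinner_conj[of y x] d_def
        field_simps power2_eq_square flip: p_def)
  also have "\<dots> = complex_of_real ((norm x)\<^sup>2 - (cmod p)\<^sup>2 / n)"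
    by (simp flip: complex_norm_square)
  finally have "0 \<le> (norm x)\<^sup>2 - (cmod p)\<^sup>2 / n"
    using cinner_nonneg[of "x + d *\<^sub>C y"] by simp
  then have "(cmod p)\<^sup>2 \<le> (norm x * norm y)\<^sup>2"
    using n by (simp add: field_simps power_mult_distrib n_def)
  then show ?thesis
    unfolding p_def by (meson norm_ge_zero mult_nonneg_nonneg power2_le_imp_le)
qed

lemma power2_cmod_cinner_le:
  assumes "norm x = 1"
  shows "(cmod (cinner y x))\<^sup>2 \<le> (norm (y::'a::cinner_space))\<^sup>2"
  using Cauchy_Schwarz_cinner[of y x] assms by (simp add: power_mono)

lemma is_adjointD: "is_adjoint A B \<Longrightarrow> cinner (A x) y = cinner x (B y)"
  unfolding is_adjoint_def by blast

lemma is_adjoint_sym: "is_adjoint A B \<Longrightarrow> is_adjoint B (A::'a::cinner_space \<Rightarrow> 'a)"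
  unfolding is_adjoint_def by (metis cinner_conj)

lemma cinner_adjoint_self:
  "is_adjoint A B \<Longrightarrow> cinner (B x) x = cnj (cinner (A x) (x::'a::cinner_space))"
  by (metis cinner_conj is_adjointD)

lemma is_adjoint_bound:
  fixes A B :: "'a::cinner_space \<Rightarrow> 'a"
  assumes adj: "is_adjoint A B" and bound: "\<And>x. norm (A x) \<le> K * norm x" and "0 \<le> K"
  shows "norm (B y) \<le> K * norm y"
proof (cases "B y = 0")
  case True
  then show ?thesis using \<open>0 \<le> K\<close> by simp
next
  case False
  have "(norm (B y))\<^sup>2 = Re (cinner (A (B y)) y)"
    by (simp add: is_adjointD[OF adj] cinner_self)
  also have "\<dots> \<le> norm (A (B y)) * norm y"
    using complex_Re_le_cmod Cauchy_Schwarz_cinner order_trans by blast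
  also have "\<dots> \<le> K * norm (B y) * norm y"
    using bound[of "B y"] by (simp add: mult_right_mono)
  finally show ?thesis
    using False by (simp add: power2_eq_square algebra_simps mult_le_cancel_right)
qed

lemma power2_cmod_add_cnj:
  "(cmod (complex_of_real a * z + complex_of_real b * cnj z))\<^sup>2
     = (a + b)\<^sup>2 * (Re z)\<^sup>2 + (a - b)\<^sup>2 * (Im z)\<^sup>2"
  unfolding cmod_power2 by (simp add: power2_eq_square algebra_simps)

lemma four_Re_square_le:
  fixes A B :: "'a::cinner_space \<Rightarrow> 'a"
  assumes adj: "is_adjoint A B" and "norm x = 1"
  shows "4 * (Re (cinner (A x) x))\<^sup>2
    \<le> (norm (A x))\<^sup>2 + (norm (B x))\<^sup>2 + 2 * Re (cinner (A (A x)) x)"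
proof -
  have "cinner (A x + B x) x = complex_of_real (2 * Re (cinner (A x) x))"
    by (simp add: cinner_add_left cinner_adjoint_self[OF adj] complex_add_cnj)
  then have "4 * (Re (cinner (A x) x))\<^sup>2 \<le> (norm (A x + B x))\<^sup>2"
    using power2_cmod_cinner_le[OF \<open>norm x = 1\<close>, of "A x + B x"] by (simp add: power_mult_distrib)
  then show ?thesis
    by (simp add: power2_norm_add_cinner is_adjointD[OF adj])
qed

lemma four_Im_square_le:
  fixes A B :: "'a::cinner_space \<Rightarrow> 'a"
  assumes adj: "is_adjoint A B" and "norm x = 1"
  shows "4 * (Im (cinner (A x) x))\<^sup>2
    \<le> (norm (A x))\<^sup>2 + (norm (B x))\<^sup>2 - 2 * Re (cinner (A (A x)) x)"
proof -
  have "cinner (A x - B x) x = complex_of_real (2 * Im (cinner (A x) x)) * \<i>"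
    by (simp add: cinner_diff_left cinner_adjoint_self[OF adj] complex_diff_cnj)
  then have "4 * (Im (cinner (A x) x))\<^sup>2 \<le> (norm (A x - B x))\<^sup>2"
    using power2_cmod_cinner_le[OF \<open>norm x = 1\<close>, of "A x - B x"]
    by (simp add: norm_mult power_mult_distrib)
  then show ?thesis
    by (simp add: power2_norm_diff_cinner is_adjointD[OF adj])
qed

lemma power2_norms_le_norm_adjoint_sum:
  fixes A B :: "'a::cinner_space \<Rightarrow> 'a"
  assumes adj: "is_adjoint A B" and "norm x = 1"
  shows "(norm (A x))\<^sup>2 + (norm (B x))\<^sup>2 \<le> norm (B (A x) + A (B x))"
proof -
  have "cinner (B (A x) + A (B x)) x = complex_of_real ((norm (A x))\<^sup>2 + (norm (B x))\<^sup>2)"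
    by (simp add: cinner_add_left is_adjointD[OF adj] is_adjointD[OF is_adjoint_sym[OF adj]]
        cinner_self)
  moreover have "cmod (cinner (B (A x) + A (B x)) x) \<le> norm (B (A x) + A (B x))"
    using Cauchy_Schwarz_cinner[of "B (A x) + A (B x)" x] \<open>norm x = 1\<close> by simp
  ultimately show ?thesis
    by (metis norm_of_real abs_le_D1)
qed

lemma weighted_squares_le:
  fixes a b p q N R P W :: real
  assumes p: "4 * p\<^sup>2 \<le> N + 2 * R" and q: "4 * q\<^sup>2 \<le> N - 2 * R"
    and "N \<le> P" and "\<bar>R\<bar> \<le> W"
  shows "(a + b)\<^sup>2 * p\<^sup>2 + (a - b)\<^sup>2 * q\<^sup>2
    \<le> a\<^sup>2 * (p\<^sup>2 + q\<^sup>2) + \<bar>a * b\<bar> * W + (\<bar>a\<bar> + \<bar>b\<bar>) / 2 * \<bar>b\<bar> * P"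
proof -
  have split: "(a + b)\<^sup>2 * p\<^sup>2 + (a - b)\<^sup>2 * q\<^sup>2
      = a\<^sup>2 * (p\<^sup>2 + q\<^sup>2) + b\<^sup>2 * (p\<^sup>2 + q\<^sup>2) + 2 * (a * b) * (p\<^sup>2 - q\<^sup>2)"
    by (simp add: power2_eq_square algebra_simps)
  have "p\<^sup>2 + q\<^sup>2 \<le> P / 2"
    using assms by linarith
  then have b_term: "b\<^sup>2 * (p\<^sup>2 + q\<^sup>2) \<le> b\<^sup>2 * (P / 2)"
    by (rule mult_left_mono) simp
  have "R \<le> W" "- R \<le> W"
    using abs_le_D1 abs_le_D2 \<open>\<bar>R\<bar> \<le> W\<close> by blast+
  then have "4 * p\<^sup>2 - 4 * q\<^sup>2 \<le> P + 2 * W" and "4 * q\<^sup>2 - 4 * p\<^sup>2 \<le> P + 2 * W"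
    using p q \<open>N \<le> P\<close> zero_le_power2[of p] zero_le_power2[of q] by linarith+
  then have "4 * \<bar>p\<^sup>2 - q\<^sup>2\<bar> \<le> P + 2 * W"
    by (simp add: abs_if)
  have "2 * (a * b) * (p\<^sup>2 - q\<^sup>2) \<le> 2 * \<bar>a * b\<bar> * \<bar>p\<^sup>2 - q\<^sup>2\<bar>"
    by (metis abs_ge_self abs_mult mult.assoc mult_left_mono zero_le_numeral)
  also have "\<dots> \<le> \<bar>a * b\<bar> * ((P + 2 * W) / 2)"
    using mult_left_mono[OF \<open>4 * \<bar>p\<^sup>2 - q\<^sup>2\<bar> \<le> P + 2 * W\<close>, of "\<bar>a * b\<bar>"] by simp
  finally have ab_term: "2 * (a * b) * (p\<^sup>2 - q\<^sup>2) \<le> \<bar>a * b\<bar> * ((P + 2 * W) / 2)" .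
  have "\<bar>a * b\<bar> * ((P + 2 * W) / 2) + b\<^sup>2 * (P / 2)
      = \<bar>a * b\<bar> * W + (\<bar>a\<bar> + \<bar>b\<bar>) / 2 * \<bar>b\<bar> * P"
    by (cases "0 \<le> b") (simp_all add: abs_mult field_simps power2_eq_square)
  then show ?thesis
    using split b_term ab_term by linarith
qed

lemma cinner_combination_square_le:
  fixes A B :: "'a::cinner_space \<Rightarrow> 'a"
  assumes adj: "is_adjoint A B" and x: "norm x = 1"
  shows "(cmod (cinner (complex_of_real a *\<^sub>C A x + complex_of_real b *\<^sub>C B x) x))\<^sup>2
    \<le> \<bar>a\<bar>\<^sup>2 * (cmod (cinner (A x) x))\<^sup>2 + \<bar>a * b\<bar> * cmod (cinner (A (A x)) x)
      + (\<bar>a\<bar> + \<bar>b\<bar>) / 2 * \<bar>b\<bar> * norm (B (A x) + A (B x))"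
proof -
  have "\<bar>Re (cinner (A (A x)) x)\<bar> \<le> cmod (cinner (A (A x)) x)"
    by (rule abs_Re_le_cmod)
  from weighted_squares_le[OF four_Re_square_le[OF adj x] four_Im_square_le[OF adj x]
      power2_norms_le_norm_adjoint_sum[OF adj x] this, of a b]
  show ?thesis
    by (simp add: cinner_add_left cinner_scaleC_left cinner_adjoint_self[OF adj]
        power2_cmod_add_cnj cmod_power2[of "cinner (A x) x"])
qed

lemma unit_sphere_nonempty:
  assumes "\<exists>x::'a::cinner_space. x \<noteq> 0"
  shows "(unit_sphere :: 'a set) \<noteq> {}"
proof -
  obtain x :: 'a where "x \<noteq> 0"
    using assms by blast
  then have "(1 / norm x) *\<^sub>R x \<in> unit_sphere"
    unfolding unit_sphere_def by simp
  then show ?thesis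
    by blast
qed

lemma norm_le_op_norm:
  assumes "\<And>y. norm (T y) \<le> K * norm y" and "x \<in> unit_sphere"
  shows "norm (T x) \<le> op_norm (T::'a::cinner_space \<Rightarrow> 'a)"
  unfolding op_norm_def
proof (rule cSUP_upper[OF \<open>x \<in> unit_sphere\<close>])
  have "norm (T y) \<le> K" if "y \<in> unit_sphere" for y
    using assms(1)[of y] that by (simp add: unit_sphere_def)
  then show "bdd_above ((\<lambda>x. norm (T x)) ` unit_sphere)"
    by (rule bdd_aboveI2)
qed

lemma cinner_le_num_radius:
  assumes "\<And>y. norm (T y) \<le> K * norm y" and "x \<in> unit_sphere"
  shows "cmod (cinner (T x) x) \<le> num_radius (T::'a::cinner_space \<Rightarrow> 'a)"
  unfolding num_radius_def
proof (rule cSUP_upper[OF \<open>x \<in> unit_sphere\<close>])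
  have "cmod (cinner (T y) y) \<le> K" if "y \<in> unit_sphere" for y
    using Cauchy_Schwarz_cinner[of "T y" y] assms(1)[of y] that
    by (simp add: unit_sphere_def)
  then show "bdd_above ((\<lambda>x. cmod (cinner (T x) x)) ` unit_sphere)"
    by (rule bdd_aboveI2)
qed

lemma SUP_power2_le:
  fixes f :: "'a \<Rightarrow> real"
  assumes "S \<noteq> {}" and "\<And>x. x \<in> S \<Longrightarrow> 0 \<le> f x" and "\<And>x. x \<in> S \<Longrightarrow> (f x)\<^sup>2 \<le> c"
  shows "(SUP x\<in>S. f x)\<^sup>2 \<le> c"
proof -
  have f_le: "f x \<le> sqrt c" if "x \<in> S" for x
    using assms(3)[OF that] by (simp add: real_le_rsqrt)
  obtain x where x: "x \<in> S"
    using assms(1) by blast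
  have "(SUP x\<in>S. f x) \<le> sqrt c"
    using assms(1) f_le by (rule cSUP_least)
  moreover have "f x \<le> (SUP x\<in>S. f x)"
    using f_le by (intro cSUP_upper[OF x] bdd_aboveI2)
  then have "0 \<le> (SUP x\<in>S. f x)"
    using assms(2)[OF x] by linarith
  ultimately have "(SUP x\<in>S. f x)\<^sup>2 \<le> (sqrt c)\<^sup>2"
    by (rule power_mono)
  also have "\<dots> = c"
    using order_trans[OF zero_le_power2 assms(3)[OF x]] by simp
  finally show ?thesis .
qed

lemma bounded_op_bound:
  assumes "bounded_op T"
  obtains K where "0 \<le> K" and "\<And>x. norm (T x) \<le> K * norm x"
proof -
  obtain K where K: "\<And>x. norm (T x) \<le> K * norm x"
    using assms unfolding bounded_op_def by blast
  have "norm (T x) \<le> max K 0 * norm x" for x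
    using K[of x] by (meson max.cobounded1 mult_right_mono norm_ge_zero order_trans)
  then show thesis
    by (rule that[OF max.cobounded2])
qed

lemma norm_adjoint_products_le:
  fixes A B :: "'a::cinner_space \<Rightarrow> 'a"
  assumes adj: "is_adjoint A B" and "0 \<le> K" and A: "\<And>x. norm (A x) \<le> K * norm x"
  shows "norm ((A \<circ> A) x) \<le> (K * K) * norm x"
    and "norm (B (A x) + A (B x)) \<le> (2 * K * K) * norm x"
proof -
  have B: "norm (B y) \<le> K * norm y" for y
    using is_adjoint_bound[OF adj A \<open>0 \<le> K\<close>] .
  have "norm ((A \<circ> A) x) \<le> K * norm (A x)"
    using A[of "A x"] by simp
  also have "\<dots> \<le> K * (K * norm x)"
    using A \<open>0 \<le> K\<close> by (rule mult_left_mono)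
  finally show "norm ((A \<circ> A) x) \<le> (K * K) * norm x"
    by (simp only: mult.assoc)
  have "norm (B (A x) + A (B x)) \<le> K * norm (A x) + K * norm (B x)"
    using norm_triangle_le[OF add_mono[OF B A]] .
  also have "\<dots> \<le> K * (K * norm x) + K * (K * norm x)"
    using A B \<open>0 \<le> K\<close> by (intro add_mono mult_left_mono)
  finally show "norm (B (A x) + A (B x)) \<le> (2 * K * K) * norm x"
    by (simp add: algebra_simps)
qed

lemma cinner_combination_square_le_num_radius:
  fixes A B :: "'a::cinner_space \<Rightarrow> 'a"
  assumes adj: "is_adjoint A B" and "0 \<le> K" and A: "\<And>x. norm (A x) \<le> K * norm x"
    and x: "x \<in> unit_sphere"
  shows "(cmod (cinner (complex_of_real a *\<^sub>C A x + complex_of_real b *\<^sub>C B x) x))\<^sup>2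
    \<le> \<bar>a\<bar>\<^sup>2 * (num_radius A)\<^sup>2 + \<bar>a * b\<bar> * num_radius (A \<circ> A)
      + (\<bar>a\<bar> + \<bar>b\<bar>) / 2 * \<bar>b\<bar> * op_norm (\<lambda>x. B (A x) + A (B x))"
proof -
  note bounds = norm_adjoint_products_le[OF adj \<open>0 \<le> K\<close> A]
  have "norm x = 1"
    using x by (simp add: unit_sphere_def)
  note cinner_combination_square_le[OF adj this, of a b]
  also have "\<bar>a\<bar>\<^sup>2 * (cmod (cinner (A x) x))\<^sup>2 \<le> \<bar>a\<bar>\<^sup>2 * (num_radius A)\<^sup>2"
    using cinner_le_num_radius[OF A x] by (simp add: mult_left_mono power_mono)
  also have "cmod (cinner (A (A x)) x) \<le> num_radius (A \<circ> A)"
    using cinner_le_num_radius[of "A \<circ> A", OF bounds(1) x] by (simp only: o_apply)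
  also have "norm (B (A x) + A (B x)) \<le> op_norm (\<lambda>x. B (A x) + A (B x))"
    using norm_le_op_norm[OF bounds(2) x] .
  finally show ?thesis
    by (simp add: mult_left_mono comp_def)
qed

theorem theorem3p7:
  fixes A Astar :: "'a::{cinner_space, complete_space} \<Rightarrow> 'a"
    and \<phi> \<psi> :: "real \<Rightarrow> real" and t :: real
  assumes "\<exists>x::'a. x \<noteq> 0"
    and "bounded_op A"
    and "is_adjoint A Astar"
    and "continuous_on {0..1} \<phi>" and "continuous_on {0..1} \<psi>"
    and "t \<in> {0..1}"
  shows "(omega_t \<phi> \<psi> A Astar t)\<^sup>2
     \<le> \<bar>\<phi> t\<bar>\<^sup>2 * (num_radius A)\<^sup>2 + \<bar>\<phi> t * \<psi> t\<bar> * num_radius (A \<circ> A)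
       + (\<bar>\<phi> t\<bar> + \<bar>\<psi> t\<bar>) / 2 * \<bar>\<psi> t\<bar> * op_norm (\<lambda>x. Astar (A x) + A (Astar x))"
proof -
  obtain K where K: "0 \<le> K" "\<And>x. norm (A x) \<le> K * norm x"
    using bounded_op_bound[OF assms(2)] by blast
  show ?thesis
    unfolding omega_t_def
    by (rule SUP_power2_le[OF unit_sphere_nonempty[OF assms(1)]] norm_ge_zero
        cinner_combination_square_le_num_radius[OF assms(3) K])+
qed

end
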